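(* Let $B\colon\mathbf{Set}\to\mathbf{Set}$ be a functor, $\Lambda$ a finite set, and $(\tau_\lambda\colon B[0,1]\to[0,1])_{\lambda\in\Lambda}$ functions such that, for every set $Y$, whenever $k_i\colon Y\to[0,1]$ converges uniformly to $l$, $\tau_\lambda\circ Bk_i$ converges uniformly to $\tau_\lambda\circ Bl$ for each $\lambda$. Let $x\colon X\to BX$ be a coalgebra. Then for each $i\in\mathbb{N}$, the set $S_i=\{[\![\varphi]\!]_x\mid\mathrm{depth}(\varphi)\le i\}\subseteq\mathbf{Set}(X,[0,1])$ is approximating, i.e. for every nonexpansive $h\colon(X,d_{S_i})\to([0,1],d_e)$, every $\lambda\in\Lambda$ and all $z,w\in BX$, $\sup_{k\in S_i,\lambda'\in\Lambda}|\tau_{\lambda'}(Bk(z))-\tau_{\lambda'}(Bk(w))|\ge|\tau_\lambda(Bh(z))-\tau_\lambda(Bh(w))|$, where $d_{S_i}(a,b)=\sup_{k\in S_i}|k(a)-k(b)|$.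
   Context: Formulas: $\varphi::=\top\mid\neg\varphi\mid\min(\varphi_1,\varphi_2)\mid(\ominus q)\varphi\ (q\in\mathbb{Q}\cap[0,1])\mid\heartsuit_\lambda\varphi$. Semantics in $[0,1]$: $[\![\top]\!]=1$, $[\![\neg\varphi]\!]=1-[\![\varphi]\!]$, $[\![\min(\varphi_1,\varphi_2)]\!]=\min$ pointwise, $[\![(\ominus q)\varphi]\!]=\max([\![\varphi]\!]-q,0)$, $[\![\heartsuit_\lambda\varphi]\!]_x=\tau_\lambda\circ B[\![\varphi]\!]_x\circ x$. Depth: $0$ for $\top$, unchanged by $\neg,(\ominus q)$, maximum for $\min$, plus one for $\heartsuit_\lambda$. $d_e$ is the Euclidean metric. *)

theory Defs
  imports "HOL-Analysis.Analysis"
begin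

datatype 'l form =
    FTop
  | FNeg "'l form"
  | FMin "'l form" "'l form"
  | FMinus rat "'l form"
  | FHeart 'l "'l form"

fun wf_form :: "'l set \<Rightarrow> 'l form \<Rightarrow> bool" where
  "wf_form L FTop = True"
| "wf_form L (FNeg \<phi>) = wf_form L \<phi>"
| "wf_form L (FMin \<phi> \<psi>) = (wf_form L \<phi> \<and> wf_form L \<psi>)"
| "wf_form L (FMinus q \<phi>) = (0 \<le> q \<and> q \<le> 1 \<and> wf_form L \<phi>)"
| "wf_form L (FHeart l \<phi>) = (l \<in> L \<and> wf_form L \<phi>)"

fun depth :: "'l form \<Rightarrow> nat" where
  "depth FTop = 0"
| "depth (FNeg \<phi>) = depth \<phi>"
| "depth (FMin \<phi> \<psi>) = max (depth \<phi>) (depth \<psi>)"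
| "depth (FMinus q \<phi>) = depth \<phi>"
| "depth (FHeart l \<phi>) = Suc (depth \<phi>)"

text \<open>The functor B is represented by its
  action Bmap on maps k : X \<Rightarrow> [0,1], giving Bk : BX \<Rightarrow> B[0,1]
  (types 'bx = BX and 'bi = B[0,1]); tau l : B[0,1] \<Rightarrow> [0,1].\<close>
fun sem :: "(('x \<Rightarrow> real) \<Rightarrow> 'bx \<Rightarrow> 'bi) \<Rightarrow> ('l \<Rightarrow> 'bi \<Rightarrow> real) \<Rightarrow> ('x \<Rightarrow> 'bx)
              \<Rightarrow> 'l form \<Rightarrow> 'x \<Rightarrow> real" where
  "sem Bmap \<tau> x FTop = (\<lambda>a. 1)"
| "sem Bmap \<tau> x (FNeg \<phi>) = (\<lambda>a. 1 - sem Bmap \<tau> x \<phi> a)"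
| "sem Bmap \<tau> x (FMin \<phi> \<psi>) = (\<lambda>a. min (sem Bmap \<tau> x \<phi> a) (sem Bmap \<tau> x \<psi> a))"
| "sem Bmap \<tau> x (FMinus q \<phi>) = (\<lambda>a. max (sem Bmap \<tau> x \<phi> a - real_of_rat q) 0)"
| "sem Bmap \<tau> x (FHeart l \<phi>) = \<tau> l \<circ> Bmap (sem Bmap \<tau> x \<phi>) \<circ> x"

definition dS :: "('x \<Rightarrow> real) set \<Rightarrow> 'x \<Rightarrow> 'x \<Rightarrow> real" where
  "dS S a b = (SUP k\<in>S. \<bar>k a - k b\<bar>)"

definition approximating ::
  "(('x \<Rightarrow> real) \<Rightarrow> 'bx \<Rightarrow> 'bi) \<Rightarrow> ('l \<Rightarrow> 'bi \<Rightarrow> real) \<Rightarrow> 'l set \<Rightarrow> ('x \<Rightarrow> real) set \<Rightarrow> bool"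
where
  "approximating Bmap \<tau> L S \<longleftrightarrow>
     (\<forall>h :: 'x \<Rightarrow> real.
        (\<forall>a. h a \<in> {0..1}) \<longrightarrow> (\<forall>a b. \<bar>h a - h b\<bar> \<le> dS S a b) \<longrightarrow>
        (\<forall>l\<in>L. \<forall>z w.
           (SUP p\<in>S \<times> L. \<bar>\<tau> (snd p) (Bmap (fst p) z) - \<tau> (snd p) (Bmap (fst p) w)\<bar>)
             \<ge> \<bar>\<tau> l (Bmap h z) - \<tau> l (Bmap h w)\<bar>))"

end

(*
  Let S_i be the set of semantics of the formulas of depth at most i. It contains the
  constant 1 and is closed under 1 - _, min and truncated subtraction of rationals.
  Moreover X is totally bounded for d_{S_i}, by induction on i: the connectives are
  nonexpansive, so d_{S_i} is dominated by the pseudometric of the functions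
  tau_l o B k o x with k in S_{i-1}; for [0,1]-valued families, total boundedness of
  this pseudometric is equivalent to total boundedness of the family in the sup
  metric; and by the continuity hypothesis k |-> tau_l o B k o x preserves the latter,
  since a Cauchy subsequence converges uniformly and hence so does its image.
  The lattice form of the Stone-Weierstrass argument (a max-min of two-point
  interpolants with rational constants) then approximates every d_{S_i}-nonexpansive h
  uniformly by elements of S_i, and the continuity hypothesis carries the inequality
  over to h.
*)

theory Submission
  imports Defs
begin

section \<open>The uniform metric on real-valued functions\<close>

(* Truncating at 1 makes this a metric on all real-valued functions; on
   [0,1]-valued functions it is the sup distance. *)
definition udist :: "('a \<Rightarrow> real) \<Rightarrow> ('a \<Rightarrow> real) \<Rightarrow> real" where
  "udist f g = (SUP a. min 1 \<bar>f a - g a\<bar>)"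

lemma udist_ge: "min 1 \<bar>f a - g a\<bar> \<le> udist f g"
  unfolding udist_def by (rule cSUP_upper) (auto intro: bdd_aboveI[of _ 1])

lemma udist_le: "(\<And>a. \<bar>f a - g a\<bar> \<le> e) \<Longrightarrow> udist f g \<le> e"
  unfolding udist_def by (rule cSUP_least) (auto intro: min.coboundedI2)

lemma abs_diff_less_udist: "udist f g < e \<Longrightarrow> e \<le> 1 \<Longrightarrow> \<bar>f a - g a\<bar> < e"
  using udist_ge[of f a g] by linarith

lemma Metric_space_udist: "Metric_space UNIV udist"
proof
  fix f g h :: "'a \<Rightarrow> real"
  show "0 \<le> udist f g" using udist_ge[of f undefined g] by linarith
  show "udist f g = udist g f" unfolding udist_def by (simp add: abs_minus_commute)
  show "udist f g = 0 \<longleftrightarrow> f = g"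
  proof
    assume "udist f g = 0"
    then have "\<bar>f a - g a\<bar> = 0" for a
      using udist_ge[of f a g] by (auto simp: min_def split: if_splits)
    then show "f = g" by auto
  next
    assume "f = g"
    then show "udist f g = 0" using udist_le[of f g 0] udist_ge[of f undefined g] by auto
  qed
  show "udist f h \<le> udist f g + udist g h"
    unfolding udist_def[of f h]
  proof (rule cSUP_least)
    fix a
    show "min 1 \<bar>f a - h a\<bar> \<le> udist f g + udist g h"
      using udist_ge[of f a g] udist_ge[of g a h] by linarith
  qed simp
qed

interpretation unif: Metric_space "UNIV :: ('a \<Rightarrow> real) set" udist
  by (rule Metric_space_udist)

lemma MCauchy_udist_iff_uniformly_convergent:
  "unif.MCauchy K \<longleftrightarrow> uniformly_convergent_on UNIV K"
  unfolding uniformly_convergent_eq_Cauchy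
proof
  assume Cauchy: "unif.MCauchy K"
  show "uniformly_Cauchy_on UNIV K"
  proof (rule uniformly_Cauchy_onI)
    fix e :: real assume "e > 0"
    then obtain N where N: "\<And>m n. N \<le> m \<Longrightarrow> N \<le> n \<Longrightarrow> udist (K m) (K n) < min e 1"
      using Cauchy unfolding unif.MCauchy_def by (meson min_less_iff_conj zero_less_one)
    have "dist (K m a) (K n a) < e" if "N \<le> m" "N \<le> n" for m n a
      using abs_diff_less_udist[OF N[OF that], of a] by (simp add: dist_real_def)
    then show "\<exists>N. \<forall>a\<in>UNIV. \<forall>m\<ge>N. \<forall>n\<ge>N. dist (K m a) (K n a) < e" by blast
  qed
next
  assume Cauchy: "uniformly_Cauchy_on UNIV K"
  show "unif.MCauchy K"
    unfolding unif.MCauchy_def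
  proof (intro conjI allI impI)
    fix e :: real assume "e > 0"
    then obtain N where N: "\<And>m n a. N \<le> m \<Longrightarrow> N \<le> n \<Longrightarrow> \<bar>K m a - K n a\<bar> < e / 2"
      using Cauchy[unfolded uniformly_Cauchy_on_def, rule_format, of "e / 2"]
      by (auto simp: dist_real_def)
    have "udist (K m) (K n) < e" if "N \<le> m" "N \<le> n" for m n
    proof -
      have "udist (K m) (K n) \<le> e / 2" using N[OF that] by (intro udist_le less_imp_le)
      then show ?thesis using \<open>e > 0\<close> by linarith
    qed
    then show "\<exists>N. \<forall>m n. N \<le> m \<longrightarrow> N \<le> n \<longrightarrow> udist (K m) (K n) < e" by blast
  qed simp
qed

lemma uniform_limit_unit_valued:
  fixes K :: "nat \<Rightarrow> 'a \<Rightarrow> real"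
  assumes "uniform_limit UNIV K f sequentially" "range K \<subseteq> UNIV \<rightarrow> {0..1}"
  shows "f \<in> UNIV \<rightarrow> {0..1}"
proof
  fix a
  have "(\<lambda>n. K n a) \<longlonglongrightarrow> f a" using tendsto_uniform_limitI[OF assms(1)] by simp
  moreover have "K n \<in> UNIV \<rightarrow> {0..1}" for n using assms(2) by blast
  then have "K n a \<in> {0..1}" for n by (simp add: Pi_iff)
  ultimately show "f a \<in> {0..1}"
    using closed_sequentially[OF closed_atLeastAtMost, of "\<lambda>n. K n a"] by blast
qed

lemma mtotally_bounded_image:
  fixes F :: "('a \<Rightarrow> real) \<Rightarrow> 'b \<Rightarrow> real"
  assumes tb: "unif.mtotally_bounded S" and S: "S \<subseteq> UNIV \<rightarrow> {0..1}"
    and F: "\<And>K f. range K \<subseteq> S \<Longrightarrow> f \<in> UNIV \<rightarrow> {0..1} \<Longrightarrow> uniform_limit UNIV K f sequentially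
      \<Longrightarrow> uniform_limit UNIV (\<lambda>n. F (K n)) (F f) sequentially"
  shows "unif.mtotally_bounded (F ` S)"
  unfolding unif.mtotally_bounded_sequentially
proof (intro conjI allI impI)
  fix \<sigma> :: "nat \<Rightarrow> 'b \<Rightarrow> real"
  assume "range \<sigma> \<subseteq> F ` S"
  then have "\<forall>n. \<exists>k. k \<in> S \<and> \<sigma> n = F k" by blast
  then obtain \<kappa> where \<kappa>: "\<And>n. \<kappa> n \<in> S" "\<And>n. \<sigma> n = F (\<kappa> n)" by metis
  obtain r where r: "strict_mono r" "unif.MCauchy (\<kappa> \<circ> r)"
    using tb \<kappa>(1) unfolding unif.mtotally_bounded_sequentially by (metis image_subsetI)
  then obtain f where f: "uniform_limit UNIV (\<kappa> \<circ> r) f sequentially"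
    using MCauchy_udist_iff_uniformly_convergent uniformly_convergent_on_def by blast
  have \<kappa>r: "range (\<kappa> \<circ> r) \<subseteq> S" using \<kappa>(1) by auto
  then have "f \<in> UNIV \<rightarrow> {0..1}"
    using uniform_limit_unit_valued[OF f] S by blast
  from F[OF \<kappa>r this f] have "uniform_limit UNIV (\<sigma> \<circ> r) (F f) sequentially"
    by (simp add: comp_def \<kappa>(2))
  with r(1) show "\<exists>r. strict_mono r \<and> unif.MCauchy (\<sigma> \<circ> r)"
    using MCauchy_udist_iff_uniformly_convergent uniformly_convergent_on_def by blast
qed simp

section \<open>Total boundedness of the pseudometric d_S\<close>

definition dS_totally_bounded :: "('x \<Rightarrow> real) set \<Rightarrow> bool" where
  "dS_totally_bounded S \<longleftrightarrow> (\<forall>e>0. \<exists>R. finite R \<and> (\<forall>a. \<exists>r\<in>R. \<forall>k\<in>S. \<bar>k a - k r\<bar> \<le> e))"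

definition quantize :: "nat \<Rightarrow> 'i set \<Rightarrow> ('i \<Rightarrow> real) \<Rightarrow> 'i \<Rightarrow> int" where
  "quantize M I v = (\<lambda>i. if i \<in> I then \<lfloor>v i * real M\<rfloor> else 0)"

lemma finite_quantize_image:
  assumes "finite I"
  shows "finite (quantize M I ` {v. \<forall>i\<in>I. v i \<in> {0..1::real}})"
proof (rule finite_subset)
  show "quantize M I ` {v. \<forall>i\<in>I. v i \<in> {0..1::real}} \<subseteq>
      {c. \<forall>i. (i \<in> I \<longrightarrow> c i \<in> {0..int M}) \<and> (i \<notin> I \<longrightarrow> c i = 0)}"
  proof (rule image_subsetI)
    fix v :: "'a \<Rightarrow> real" assume v: "v \<in> {v. \<forall>i\<in>I. v i \<in> {0..1}}"
    have "\<lfloor>v i * real M\<rfloor> \<in> {0..int M}" if "i \<in> I" for i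
    proof -
      have "0 \<le> v i * real M" "v i * real M \<le> real M"
        using v that mult_left_le_one_le[of "real M" "v i"] by (auto simp: mult.commute)
      then show ?thesis by (simp add: floor_le_iff le_floor_iff)
    qed
    then show "quantize M I v \<in> {c. \<forall>i. (i \<in> I \<longrightarrow> c i \<in> {0..int M}) \<and> (i \<notin> I \<longrightarrow> c i = 0)}"
      by (simp add: quantize_def)
  qed
  show "finite {c. \<forall>i. (i \<in> I \<longrightarrow> c i \<in> {0..int M}) \<and> (i \<notin> I \<longrightarrow> c i = 0)}"
    using assms by (intro finite_set_of_finite_funs) auto
qed

lemma quantize_eq_imp_abs_diff_less:
  assumes "quantize M I u = quantize M I v" "i \<in> I" "M > 0"
  shows "\<bar>u i - v i\<bar> < 1 / M"
proof -
  have "\<lfloor>u i * real M\<rfloor> = \<lfloor>v i * real M\<rfloor>"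
    using fun_cong[OF assms(1), of i] assms(2) by (simp add: quantize_def)
  then have "\<bar>u i * real M - v i * real M\<bar> < 1"
    using floor_correct[of "u i * real M"] floor_correct[of "v i * real M"] by linarith
  moreover have "\<bar>u i - v i\<bar> * real M = \<bar>u i * real M - v i * real M\<bar>"
    by (simp add: abs_mult flip: left_diff_distrib)
  ultimately show ?thesis
    using assms(3) by (simp add: field_simps)
qed

lemma dS_totally_bounded_if_mtotally_bounded:
  assumes tb: "unif.mtotally_bounded G" and G: "G \<subseteq> UNIV \<rightarrow> {0..1}"
  shows "dS_totally_bounded G"
  unfolding dS_totally_bounded_def
proof (intro allI impI)
  fix e :: real assume "e > 0"
  define e' where "e' = min (e / 3) 1"
  have e': "e' > 0" "e' \<le> 1" "3 * e' \<le> e" using \<open>e > 0\<close> by (auto simp: e'_def)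
  obtain K where K: "finite K" "K \<subseteq> G" "G \<subseteq> (\<Union>f\<in>K. unif.mball f e')"
    using tb[unfolded unif.mtotally_bounded_def, rule_format, OF \<open>e' > 0\<close>] by blast
  obtain M :: nat where M: "M > 0" "1 / real M < e'"
    using ex_inverse_of_nat_less[OF \<open>e' > 0\<close>] by (auto simp: inverse_eq_divide)
  define c where "c a = quantize M K (\<lambda>f. f a)" for a
  have "c a \<in> quantize M K ` {v. \<forall>i\<in>K. v i \<in> {0..1}}" for a
    unfolding c_def by (rule imageI) (use K(2) G in \<open>auto simp: Pi_iff\<close>)
  then have "range c \<subseteq> quantize M K ` {v. \<forall>i\<in>K. v i \<in> {0..1}}"
    by blast
  then have "finite (range c)"
    using finite_quantize_image[OF K(1)] finite_subset by blast
  then obtain R where R: "finite R" "range c = c ` R"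
    using finite_subset_image[of "range c" c UNIV] by auto
  have "\<exists>r\<in>R. \<forall>g\<in>G. \<bar>g a - g r\<bar> \<le> e" for a
  proof -
    obtain r where r: "r \<in> R" "c r = c a" using R(2) by (metis imageE rangeI)
    have "\<bar>g a - g r\<bar> \<le> e" if "g \<in> G" for g
    proof -
      obtain f where f: "f \<in> K" "udist f g < e'" using K(3) \<open>g \<in> G\<close> by auto
      have "\<bar>f a - f r\<bar> < 1 / M"
        using quantize_eq_imp_abs_diff_less[of M K "\<lambda>f. f a" "\<lambda>f. f r"] r(2) f(1) M(1)
        by (simp add: c_def)
      moreover have "\<bar>f a - g a\<bar> < e'" "\<bar>f r - g r\<bar> < e'"
        using abs_diff_less_udist[OF f(2) e'(2)] by auto
      ultimately show ?thesis using M(2) e'(3) by linarith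
    qed
    with r(1) show ?thesis by blast
  qed
  with R(1) show "\<exists>R. finite R \<and> (\<forall>a. \<exists>r\<in>R. \<forall>g\<in>G. \<bar>g a - g r\<bar> \<le> e)" by blast
qed

lemma mtotally_bounded_if_dS_totally_bounded:
  assumes tb: "dS_totally_bounded S" and S: "S \<subseteq> UNIV \<rightarrow> {0..1}"
  shows "unif.mtotally_bounded S"
  unfolding unif.mtotally_bounded_def
proof (intro allI impI)
  fix \<epsilon> :: real assume "\<epsilon> > 0"
  define e where "e = \<epsilon> / 4"
  have "e > 0" using \<open>\<epsilon> > 0\<close> by (simp add: e_def)
  obtain R where R: "finite R" "\<And>a. \<exists>r\<in>R. \<forall>k\<in>S. \<bar>k a - k r\<bar> \<le> e"
    using tb \<open>e > 0\<close> unfolding dS_totally_bounded_def by blast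
  obtain M :: nat where M: "M > 0" "1 / real M < e"
    using ex_inverse_of_nat_less[OF \<open>e > 0\<close>] by (auto simp: inverse_eq_divide)
  have "quantize M R ` S \<subseteq> quantize M R ` {v. \<forall>i\<in>R. v i \<in> {0..1}}"
    using S by (auto simp: Pi_iff)
  then have "finite (quantize M R ` S)"
    using finite_quantize_image[OF R(1)] finite_subset by blast
  then obtain K where K: "K \<subseteq> S" "finite K" "quantize M R ` S = quantize M R ` K"
    using finite_subset_image[of "quantize M R ` S" "quantize M R" S] by auto
  have "S \<subseteq> (\<Union>f\<in>K. unif.mball f \<epsilon>)"
  proof
    fix k assume "k \<in> S"
    then obtain f where f: "f \<in> K" "quantize M R f = quantize M R k" using K(3) by (metis imageE imageI)
    have "\<bar>f a - k a\<bar> \<le> 3 * e" for a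
    proof -
      obtain r where r: "r \<in> R" "\<forall>k\<in>S. \<bar>k a - k r\<bar> \<le> e" using R(2) by blast
      have "\<bar>f r - k r\<bar> < 1 / M" using quantize_eq_imp_abs_diff_less[OF f(2) r(1) M(1)] .
      moreover have "\<bar>f a - f r\<bar> \<le> e" "\<bar>k a - k r\<bar> \<le> e" using r(2) f(1) K(1) \<open>k \<in> S\<close> by auto
      ultimately show ?thesis using M(2) by linarith
    qed
    then have "udist f k < \<epsilon>"
      using udist_le[of f k "3 * e"] \<open>e > 0\<close> by (simp add: e_def)
    with f(1) show "k \<in> (\<Union>f\<in>K. unif.mball f \<epsilon>)" by auto
  qed
  with K show "\<exists>K. finite K \<and> K \<subseteq> S \<and> S \<subseteq> (\<Union>f\<in>K. unif.mball f \<epsilon>)" by blast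
qed

section \<open>Uniform approximation in sets closed under the connectives\<close>

lemma Rats_approx_in_interval:
  fixes a b t \<delta> :: real
  assumes "a \<in> \<rat>" "b \<in> \<rat>" "a \<le> t" "t \<le> b" "\<delta> > 0"
  obtains r where "r \<in> \<rat>" "a \<le> r" "r \<le> b" "\<bar>r - t\<bar> \<le> \<delta>"
proof -
  obtain r where r: "r \<in> \<rat>" "t - \<delta> < r" "r < t + \<delta>"
    using Rats_dense_in_real[of "t - \<delta>" "t + \<delta>"] assms(5) by auto
  have "max a (min b r) \<in> \<rat>" using r(1) assms(1,2) by (simp add: max_def min_def)
  moreover have "a \<le> max a (min b r)" "max a (min b r) \<le> b" "\<bar>max a (min b r) - t\<bar> \<le> \<delta>"
    using r assms(3-5) by auto
  ultimately show ?thesis using that by blast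
qed

locale connective_closed =
  fixes S :: "('x \<Rightarrow> real) set"
  assumes unit_valued: "S \<subseteq> UNIV \<rightarrow> {0..1}"
    and top_mem: "(\<lambda>_. 1) \<in> S"
    and neg_mem: "k \<in> S \<Longrightarrow> (\<lambda>a. 1 - k a) \<in> S"
    and min_mem: "k \<in> S \<Longrightarrow> k' \<in> S \<Longrightarrow> (\<lambda>a. min (k a) (k' a)) \<in> S"
    and truncated_minus_mem: "k \<in> S \<Longrightarrow> 0 \<le> q \<Longrightarrow> q \<le> 1 \<Longrightarrow> (\<lambda>a. max (k a - of_rat q) 0) \<in> S"
begin

lemma mem_unit_interval: "k \<in> S \<Longrightarrow> k a \<in> {0..1}"
  using unit_valued by (auto simp: Pi_iff)

lemma max_mem:
  assumes "k \<in> S" "k' \<in> S"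
  shows "(\<lambda>a. max (k a) (k' a)) \<in> S"
proof -
  have "(\<lambda>a. 1 - min (1 - k a) (1 - k' a)) \<in> S"
    using assms by (intro neg_mem min_mem)
  moreover have "(\<lambda>a. 1 - min (1 - k a) (1 - k' a)) = (\<lambda>a. max (k a) (k' a))"
    by (auto simp: fun_eq_iff min_def max_def)
  ultimately show ?thesis by simp
qed

lemma const_mem:
  assumes "r \<in> \<rat>" "0 \<le> r" "r \<le> 1"
  shows "(\<lambda>_. r) \<in> S"
proof -
  obtain q where q: "r = of_rat q" using assms(1) by (rule Rats_cases)
  then have "0 \<le> q" "q \<le> 1" using assms(2,3) by auto
  then have "(\<lambda>a. max (1 - of_rat (1 - q)) 0) \<in> S"
    by (intro truncated_minus_mem[OF top_mem]) auto
  then show ?thesis using q \<open>0 \<le> q\<close> by (simp add: of_rat_diff)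
qed

lemma shift_mem:
  assumes k: "k \<in> S" and s: "s \<in> \<rat>" "-1 \<le> s" "s \<le> 1"
  shows "(\<lambda>a. max 0 (min 1 (k a - s))) \<in> S"
proof -
  obtain q where q: "s = of_rat q" using s(1) by (rule Rats_cases)
  have k01: "k a \<in> {0..1}" for a using mem_unit_interval[OF k] .
  show ?thesis
  proof (cases "0 \<le> q")
    case True
    have "0 \<le> s" using True q by simp
    from True have "(\<lambda>a. max (k a - of_rat q) 0) \<in> S"
      using k q s(3) by (intro truncated_minus_mem) auto
    moreover have "max (k a - of_rat q) 0 = max 0 (min 1 (k a - s))" for a
      using k01[of a] \<open>0 \<le> s\<close> by (auto simp: q[symmetric] max_def min_def)
    ultimately show ?thesis by simp
  next
    case False
    have "-1 \<le> q" using s(2) q of_rat_less_eq[where 'a=real, of "-1" q] by simp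
    have "s < 0" using False q by simp
    from \<open>-1 \<le> q\<close> False have "(\<lambda>a. 1 - max ((1 - k a) - of_rat (- q)) 0) \<in> S"
      using k by (intro neg_mem truncated_minus_mem) auto
    moreover have "1 - max ((1 - k a) - of_rat (- q)) 0 = max 0 (min 1 (k a - s))" for a
      using k01[of a] \<open>s < 0\<close> by (auto simp: of_rat_minus q[symmetric] max_def min_def)
    ultimately show ?thesis by simp
  qed
qed

lemma Min_mem:
  assumes "finite A" "A \<noteq> {}" "\<And>i. i \<in> A \<Longrightarrow> g i \<in> S"
  shows "(\<lambda>a. MIN i\<in>A. g i a) \<in> S"
  using assms
proof (induction A rule: finite_ne_induct)
  case (insert j A)
  then have "(\<lambda>a. min (g j a) (MIN i\<in>A. g i a)) \<in> S" by (intro min_mem) auto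
  with insert.hyps show ?case by simp
qed simp

lemma Max_mem:
  assumes "finite A" "A \<noteq> {}" "\<And>i. i \<in> A \<Longrightarrow> g i \<in> S"
  shows "(\<lambda>a. MAX i\<in>A. g i a) \<in> S"
  using assms
proof (induction A rule: finite_ne_induct)
  case (insert j A)
  then have "(\<lambda>a. max (g j a) (MAX i\<in>A. g i a)) \<in> S" by (intro max_mem) auto
  with insert.hyps show ?case by simp
qed simp

lemma bdd_above_abs_diff: "bdd_above ((\<lambda>k. \<bar>k a - k b\<bar>) ` S)"
proof (rule bdd_aboveI[of _ 1])
  fix v assume "v \<in> (\<lambda>k. \<bar>k a - k b\<bar>) ` S"
  then obtain k where "k \<in> S" "v = \<bar>k a - k b\<bar>" by blast
  then show "v \<le> 1" using mem_unit_interval[of k a] mem_unit_interval[of k b] by auto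
qed

lemma dS_le: "(\<And>k. k \<in> S \<Longrightarrow> \<bar>k a - k b\<bar> \<le> e) \<Longrightarrow> dS S a b \<le> e"
  unfolding dS_def by (rule cSUP_least) (use top_mem in auto)

lemma less_dS_imp: "D < dS S a b \<Longrightarrow> \<exists>k\<in>S. D < \<bar>k a - k b\<bar>"
  unfolding dS_def using less_cSUP_iff[OF _ bdd_above_abs_diff] top_mem by blast

lemma two_point_approx_ordered:
  assumes h01: "h \<in> UNIV \<rightarrow> {0..1}" and h: "\<forall>a b. \<bar>h a - h b\<bar> \<le> dS S a b" and "\<delta> > 0"
    and le: "h q \<le> h p"
  shows "\<exists>g\<in>S. \<bar>g p - h p\<bar> \<le> \<delta> \<and> \<bar>g q - h q\<bar> \<le> \<delta>"
proof -
  have hp: "h p \<in> {0..1}" and hq: "h q \<in> {0..1}" using h01 by auto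
  show ?thesis
  proof (cases "h p - h q \<le> \<delta> / 2")
    case True
    obtain r where r: "r \<in> \<rat>" "0 \<le> r" "r \<le> 1" "\<bar>r - h p\<bar> \<le> \<delta> / 2"
      using Rats_approx_in_interval[of 0 1 "h p" "\<delta> / 2"] hp \<open>\<delta> > 0\<close> by auto
    then have "(\<lambda>_. r) \<in> S" by (intro const_mem)
    moreover have "\<bar>r - h p\<bar> \<le> \<delta>" "\<bar>r - h q\<bar> \<le> \<delta>" using r(4) True le by linarith+
    ultimately show ?thesis by auto
  next
    case False
    have "h p - h q - \<delta> / 4 < dS S p q"
      using h[rule_format, of p q] abs_ge_self[of "h p - h q"] False \<open>\<delta> > 0\<close> by linarith
    then obtain k where k: "k \<in> S" "h p - h q - \<delta> / 4 < \<bar>k p - k q\<bar>" using less_dS_imp by blast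
    obtain k' where k': "k' \<in> S" "h p - h q - \<delta> / 4 < k' p - k' q"
    proof (cases "k q \<le> k p")
      case True then show ?thesis using that k by auto
    next
      case False then show ?thesis using that[of "\<lambda>a. 1 - k a"] k neg_mem by auto
    qed
    have "k' p - h p \<in> {-1..1}" using mem_unit_interval[OF k'(1), of p] hp by auto
    then obtain s where s: "s \<in> \<rat>" "-1 \<le> s" "s \<le> 1" "\<bar>s - (k' p - h p)\<bar> \<le> \<delta> / 4"
      using Rats_approx_in_interval[of "-1" 1 "k' p - h p" "\<delta> / 4"] \<open>\<delta> > 0\<close> by auto
    obtain r where r: "r \<in> \<rat>" "0 \<le> r" "r \<le> 1" "\<bar>r - h q\<bar> \<le> \<delta> / 4"
      using Rats_approx_in_interval[of 0 1 "h q" "\<delta> / 4"] hq \<open>\<delta> > 0\<close> by auto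
    (* k' separates p from q almost as well as h does: shifting k' to agree with h at p
       and raising it to about h q yields the interpolant. *)
    define g where "g a = max (max 0 (min 1 (k' a - s))) r" for a
    have "g \<in> S" unfolding g_def by (intro max_mem shift_mem const_mem k' s r)
    moreover have "\<bar>g p - h p\<bar> \<le> \<delta>"
      using s(4)[unfolded abs_le_iff] r(4)[unfolded abs_le_iff] le hp \<open>\<delta> > 0\<close>
      unfolding g_def by (auto simp: abs_le_iff max_def min_def)
    moreover have "\<bar>g q - h q\<bar> \<le> \<delta>"
      using s(4)[unfolded abs_le_iff] r(4)[unfolded abs_le_iff] k'(2) hq \<open>\<delta> > 0\<close>
      unfolding g_def by (auto simp: abs_le_iff max_def min_def)
    ultimately show ?thesis by blast
  qed
qed

lemma two_point_approx:
  assumes "h \<in> UNIV \<rightarrow> {0..1}" "\<forall>a b. \<bar>h a - h b\<bar> \<le> dS S a b" "\<delta> > 0"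
  shows "\<exists>g\<in>S. \<bar>g p - h p\<bar> \<le> \<delta> \<and> \<bar>g q - h q\<bar> \<le> \<delta>"
  using two_point_approx_ordered[OF assms, of p q] two_point_approx_ordered[OF assms, of q p]
  by (cases "h q \<le> h p") auto

lemma uniform_approx:
  assumes tb: "dS_totally_bounded S" and h01: "h \<in> UNIV \<rightarrow> {0..1}"
    and h: "\<forall>a b. \<bar>h a - h b\<bar> \<le> dS S a b" and "\<epsilon> > 0"
  shows "\<exists>f\<in>S. \<forall>a. \<bar>f a - h a\<bar> \<le> \<epsilon>"
proof -
  define e where "e = \<epsilon> / 3"
  have "e > 0" using \<open>\<epsilon> > 0\<close> by (simp add: e_def)
  obtain R where R: "finite R" "\<And>a. \<exists>r\<in>R. \<forall>k\<in>S. \<bar>k a - k r\<bar> \<le> e"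
    using tb \<open>e > 0\<close> unfolding dS_totally_bounded_def by blast
  have "R \<noteq> {}" using R(2) by blast
  obtain g where g: "\<And>p q. g p q \<in> S"
      "\<And>p q. \<bar>g p q p - h p\<bar> \<le> e" "\<And>p q. \<bar>g p q q - h q\<bar> \<le> e"
    using two_point_approx[OF h01 h \<open>e > 0\<close>] by metis
  (* Stone-Weierstrass for lattices: a max-min of two-point interpolants on the net R *)
  define f where "f a = (MAX p\<in>R. MIN q\<in>R. g p q a)" for a
  have "f \<in> S"
    unfolding f_def using R(1) \<open>R \<noteq> {}\<close> g(1) by (intro Max_mem Min_mem)
  moreover have "\<bar>f y - h y\<bar> \<le> \<epsilon>" for y
  proof -
    obtain r where r: "r \<in> R" "\<And>k. k \<in> S \<Longrightarrow> \<bar>k y - k r\<bar> \<le> e" using R(2) by blast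
    have hr: "\<bar>h y - h r\<bar> \<le> e" using h[rule_format, of y r] dS_le[of y r e, OF r(2)] by linarith
    have "(MIN q\<in>R. g p q y) \<le> h y + 3 * e" if "p \<in> R" for p
    proof -
      have "(MIN q\<in>R. g p q y) \<le> g p r y" using R(1) r(1) by (intro Min_le) auto
      also have "\<dots> \<le> h y + 3 * e" using r(2)[OF g(1)[of p r]] g(3)[of p r] hr by linarith
      finally show ?thesis .
    qed
    then have "f y \<le> h y + 3 * e"
      unfolding f_def using R(1) \<open>R \<noteq> {}\<close> by (subst Max_le_iff) auto
    moreover have "h y - 3 * e \<le> f y"
    proof -
      have "h y - 3 * e \<le> g r q y" for q using r(2)[OF g(1)[of r q]] g(2)[of r q] hr by linarith
      then have "h y - 3 * e \<le> (MIN q\<in>R. g r q y)" using R(1) \<open>R \<noteq> {}\<close> by (subst Min_ge_iff) auto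
      also have "\<dots> \<le> f y" unfolding f_def using R(1) r(1) by (intro Max_ge) auto
      finally show ?thesis .
    qed
    ultimately show ?thesis by (simp add: e_def abs_le_iff)
  qed
  ultimately show ?thesis by blast
qed

end

lemma approximating_if_uniformly_dense:
  fixes S :: "('x \<Rightarrow> real) set"
  assumes tau_range: "\<forall>l\<in>L. \<forall>b. \<tau> l b \<in> {0..1}"
    and tau_cont: "\<And>K f l b. range K \<subseteq> S \<Longrightarrow> f \<in> UNIV \<rightarrow> {0..1} \<Longrightarrow>
      uniform_limit UNIV K f sequentially \<Longrightarrow> l \<in> L \<Longrightarrow>
      (\<lambda>n. \<tau> l (Bmap (K n) b)) \<longlonglongrightarrow> \<tau> l (Bmap f b)"
    and dense: "\<And>h \<epsilon>. h \<in> UNIV \<rightarrow> {0..1} \<Longrightarrow> \<forall>a b. \<bar>h a - h b\<bar> \<le> dS S a b \<Longrightarrow> \<epsilon> > 0 \<Longrightarrow>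
      \<exists>k\<in>S. \<forall>a. \<bar>k a - h a\<bar> \<le> \<epsilon>"
  shows "approximating Bmap \<tau> L S"
  unfolding approximating_def
proof (intro allI impI ballI)
  fix h :: "'x \<Rightarrow> real" and l z w
  assume h01: "\<forall>a. h a \<in> {0..1}" and h: "\<forall>a b. \<bar>h a - h b\<bar> \<le> dS S a b" and l: "l \<in> L"
  have "\<forall>n. \<exists>k\<in>S. \<forall>a. \<bar>k a - h a\<bar> \<le> 1 / Suc n"
    using dense h01 h by (simp add: Pi_iff)
  then obtain K where K: "\<And>n. K n \<in> S" "\<And>n a. \<bar>K n a - h a\<bar> \<le> 1 / Suc n" by metis
  have "uniform_limit UNIV K h sequentially"
    unfolding uniform_limit_sequentially_iff
  proof (intro allI impI)
    fix e :: real assume "e > 0"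
    then obtain N where N: "1 / Suc N < e"
      using reals_Archimedean by (metis inverse_eq_divide)
    have "dist (K n a) (h a) < e" if "N \<le> n" for n a
    proof -
      have "1 / real (Suc n) \<le> 1 / Suc N" using that by (simp add: frac_le)
      then show ?thesis using K(2)[of n a] N by (simp add: dist_real_def)
    qed
    then show "\<exists>N. \<forall>n\<ge>N. \<forall>a\<in>UNIV. dist (K n a) (h a) < e" by blast
  qed
  moreover have "range K \<subseteq> S" "h \<in> UNIV \<rightarrow> {0..1}" using K(1) h01 by auto
  ultimately have lim: "(\<lambda>n. \<tau> l (Bmap (K n) b)) \<longlonglongrightarrow> \<tau> l (Bmap h b)" for b
    using tau_cont l by blast
  let ?F = "\<lambda>p. \<bar>\<tau> (snd p) (Bmap (fst p) z) - \<tau> (snd p) (Bmap (fst p) w)\<bar>"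
  have "bdd_above (?F ` (S \<times> L))"
  proof (rule bdd_aboveI[of _ 1])
    fix v assume "v \<in> ?F ` (S \<times> L)"
    then obtain k l' where "l' \<in> L" "v = \<bar>\<tau> l' (Bmap k z) - \<tau> l' (Bmap k w)\<bar>" by auto
    moreover have "\<tau> l' (Bmap k z) \<in> {0..1}" "\<tau> l' (Bmap k w) \<in> {0..1}"
      using tau_range \<open>l' \<in> L\<close> by auto
    ultimately show "v \<le> 1" by auto
  qed
  then have "\<bar>\<tau> l (Bmap (K n) z) - \<tau> l (Bmap (K n) w)\<bar> \<le> (SUP p\<in>S \<times> L. ?F p)" for n
    using cSUP_upper[of "(K n, l)" "S \<times> L" ?F] K(1) l by auto
  moreover have "(\<lambda>n. \<bar>\<tau> l (Bmap (K n) z) - \<tau> l (Bmap (K n) w)\<bar>)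
      \<longlonglongrightarrow> \<bar>\<tau> l (Bmap h z) - \<tau> l (Bmap h w)\<bar>"
    by (intro tendsto_intros lim)
  ultimately show "(SUP p\<in>S \<times> L. ?F p) \<ge> \<bar>\<tau> l (Bmap h z) - \<tau> l (Bmap h w)\<bar>"
    using LIMSEQ_le_const2 by blast
qed

section \<open>Formulas of bounded depth\<close>

locale coalgebraic_modal_logic =
  fixes Bmap :: "('x \<Rightarrow> real) \<Rightarrow> 'bx \<Rightarrow> 'bi"
    and \<tau> :: "'l \<Rightarrow> 'bi \<Rightarrow> real"
    and L :: "'l set"
    and x :: "'x \<Rightarrow> 'bx"
  assumes finL: "finite L"
    and tau_range: "\<forall>l\<in>L. \<forall>b. \<tau> l b \<in> {0..1}"
    and tau_cont: "\<forall>(K :: nat \<Rightarrow> 'x \<Rightarrow> real) (f :: 'x \<Rightarrow> real).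
        (\<forall>n a. K n a \<in> {0..1}) \<longrightarrow> (\<forall>a. f a \<in> {0..1}) \<longrightarrow>
        uniform_limit UNIV K f sequentially \<longrightarrow>
        (\<forall>l\<in>L. uniform_limit UNIV (\<lambda>n. \<tau> l \<circ> Bmap (K n)) (\<tau> l \<circ> Bmap f) sequentially)"
begin

abbreviation sem_x :: "'l form \<Rightarrow> 'x \<Rightarrow> real" where
  "sem_x \<equiv> sem Bmap \<tau> x"

definition formula_funs :: "nat \<Rightarrow> ('x \<Rightarrow> real) set" where
  "formula_funs i = {sem_x \<phi> | \<phi>. wf_form L \<phi> \<and> depth \<phi> \<le> i}"

definition modal_funs :: "nat \<Rightarrow> ('x \<Rightarrow> real) set" where
  "modal_funs i = {sem_x (FHeart l \<psi>) | l \<psi>. wf_form L (FHeart l \<psi>) \<and> depth (FHeart l \<psi>) \<le> i}"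

lemma sem_unit_interval: "wf_form L \<phi> \<Longrightarrow> sem_x \<phi> a \<in> {0..1}"
proof (induction \<phi> arbitrary: a)
  case (FMinus q \<phi>)
  then have "sem_x \<phi> a \<in> {0..1}" "0 \<le> real_of_rat q" by auto
  then show ?case by (auto simp del: zero_le_of_rat_iff)
qed (use tau_range in \<open>auto simp: min_le_iff_disj\<close>)

lemma connective_closed_formula_funs: "connective_closed (formula_funs i)"
proof
  show "formula_funs i \<subseteq> UNIV \<rightarrow> {0..1}"
    using sem_unit_interval by (auto simp: formula_funs_def)
  show "(\<lambda>_. 1) \<in> formula_funs i"
    unfolding formula_funs_def by (rule CollectI, rule exI[of _ FTop]) auto
  fix k k' assume "k \<in> formula_funs i"
  then obtain \<phi> where \<phi>: "k = sem_x \<phi>" "wf_form L \<phi>" "depth \<phi> \<le> i"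
    by (auto simp: formula_funs_def)
  show "(\<lambda>a. 1 - k a) \<in> formula_funs i"
    unfolding formula_funs_def by (rule CollectI, rule exI[of _ "FNeg \<phi>"]) (use \<phi> in auto)
  show "(\<lambda>a. max (k a - of_rat q) 0) \<in> formula_funs i" if "0 \<le> q" "q \<le> 1" for q
    unfolding formula_funs_def by (rule CollectI, rule exI[of _ "FMinus q \<phi>"]) (use \<phi> that in auto)
  assume "k' \<in> formula_funs i"
  then obtain \<psi> where \<psi>: "k' = sem_x \<psi>" "wf_form L \<psi>" "depth \<psi> \<le> i"
    by (auto simp: formula_funs_def)
  show "(\<lambda>a. min (k a) (k' a)) \<in> formula_funs i"
    unfolding formula_funs_def by (rule CollectI, rule exI[of _ "FMin \<phi> \<psi>"]) (use \<phi> \<psi> in auto)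
qed

lemma abs_diff_sem_le:
  assumes "wf_form L \<phi>" "depth \<phi> \<le> i" "0 \<le> e"
    and "\<And>g. g \<in> modal_funs i \<Longrightarrow> \<bar>g a - g b\<bar> \<le> e"
  shows "\<bar>sem_x \<phi> a - sem_x \<phi> b\<bar> \<le> e"
  using assms
proof (induction \<phi>)
  case (FMin \<phi>1 \<phi>2)
  then have "\<bar>sem_x \<phi>1 a - sem_x \<phi>1 b\<bar> \<le> e" "\<bar>sem_x \<phi>2 a - sem_x \<phi>2 b\<bar> \<le> e" by auto
  then show ?case by (simp add: min_def abs_le_iff)
next
  case (FMinus q \<phi>)
  then have "\<bar>sem_x \<phi> a - sem_x \<phi> b\<bar> \<le> e" by auto
  then show ?case by (simp add: max_def abs_le_iff)
next
  case (FHeart l \<psi>)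
  then have "sem_x (FHeart l \<psi>) \<in> modal_funs i" unfolding modal_funs_def by blast
  then show ?case using FHeart.prems(4) by blast
qed simp_all

lemma dS_totally_bounded_formula_funs_if:
  assumes "dS_totally_bounded (modal_funs i)"
  shows "dS_totally_bounded (formula_funs i)"
  unfolding dS_totally_bounded_def
proof (intro allI impI)
  fix e :: real assume "e > 0"
  then obtain R where R: "finite R" "\<forall>a. \<exists>r\<in>R. \<forall>g\<in>modal_funs i. \<bar>g a - g r\<bar> \<le> e"
    using assms[unfolded dS_totally_bounded_def, rule_format, OF \<open>e > 0\<close>] by blast
  have close: "\<forall>k\<in>formula_funs i. \<bar>k a - k r\<bar> \<le> e"
    if "\<forall>g\<in>modal_funs i. \<bar>g a - g r\<bar> \<le> e" for a r
  proof
    fix k assume "k \<in> formula_funs i"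
    then obtain \<phi> where "k = sem_x \<phi>" "wf_form L \<phi>" "depth \<phi> \<le> i"
      by (auto simp: formula_funs_def)
    then show "\<bar>k a - k r\<bar> \<le> e"
      using abs_diff_sem_le[of \<phi> i e a r] that \<open>e > 0\<close> by simp
  qed
  show "\<exists>R. finite R \<and> (\<forall>a. \<exists>r\<in>R. \<forall>k\<in>formula_funs i. \<bar>k a - k r\<bar> \<le> e)"
    using R close by meson
qed

lemma modal_funs_Suc: "modal_funs (Suc i) = (\<Union>l\<in>L. (\<lambda>k. \<tau> l \<circ> Bmap k \<circ> x) ` formula_funs i)"
  unfolding modal_funs_def formula_funs_def by fastforce

lemma uniform_limit_tau_Bmap:
  assumes "range K \<subseteq> UNIV \<rightarrow> {0..1}" "f \<in> UNIV \<rightarrow> {0..1}"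
    and "uniform_limit UNIV K f sequentially" "l \<in> L"
  shows "uniform_limit UNIV (\<lambda>n. \<tau> l \<circ> Bmap (K n)) (\<tau> l \<circ> Bmap f) sequentially"
proof -
  have "\<forall>n a. K n a \<in> {0..1}" "\<forall>a. f a \<in> {0..1}"
    using assms(1,2) by (auto simp: image_subset_iff Pi_iff)
  then show ?thesis using tau_cont assms(3,4) by blast
qed

lemma dS_totally_bounded_formula_funs: "dS_totally_bounded (formula_funs i)"
proof (induction i)
  case 0
  have "modal_funs 0 = {}" by (simp add: modal_funs_def)
  then have "dS_totally_bounded (modal_funs 0)"
    unfolding dS_totally_bounded_def by (intro allI impI exI[of _ "{undefined}"]) auto
  then show ?case by (rule dS_totally_bounded_formula_funs_if)
next
  case (Suc i)
  have S: "formula_funs i \<subseteq> UNIV \<rightarrow> {0..1}"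
    using connective_closed.unit_valued[OF connective_closed_formula_funs] .
  have "unif.mtotally_bounded ((\<lambda>k. \<tau> l \<circ> Bmap k \<circ> x) ` formula_funs i)" if "l \<in> L" for l
  proof (rule mtotally_bounded_image[OF mtotally_bounded_if_dS_totally_bounded[OF Suc S] S])
    fix K f
    assume "range K \<subseteq> formula_funs i" "f \<in> UNIV \<rightarrow> {0..1}" "uniform_limit UNIV K f sequentially"
    then have "uniform_limit UNIV (\<lambda>n. \<tau> l \<circ> Bmap (K n)) (\<tau> l \<circ> Bmap f) sequentially"
      using S \<open>l \<in> L\<close> by (intro uniform_limit_tau_Bmap) auto
    then show "uniform_limit UNIV (\<lambda>n. \<tau> l \<circ> Bmap (K n) \<circ> x) (\<tau> l \<circ> Bmap f \<circ> x) sequentially"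
      using uniform_limit_compose'[where h=x and B=UNIV and A=UNIV] by (simp add: comp_def)
  qed
  then have "unif.mtotally_bounded (modal_funs (Suc i))"
    unfolding modal_funs_Suc using finL by (intro unif.mtotally_bounded_Union) auto
  moreover have "modal_funs (Suc i) \<subseteq> UNIV \<rightarrow> {0..1}"
    using tau_range by (auto simp: modal_funs_def)
  ultimately show ?case
    by (intro dS_totally_bounded_formula_funs_if dS_totally_bounded_if_mtotally_bounded)
qed

lemma approximating_formula_funs: "approximating Bmap \<tau> L (formula_funs i)"
proof -
  interpret connective_closed "formula_funs i" by (rule connective_closed_formula_funs)
  show ?thesis
  proof (rule approximating_if_uniformly_dense[OF tau_range])
    fix K f l b
    assume "range K \<subseteq> formula_funs i" "f \<in> UNIV \<rightarrow> {0..1}"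
      "uniform_limit UNIV K f sequentially" "l \<in> L"
    then have "uniform_limit UNIV (\<lambda>n. \<tau> l \<circ> Bmap (K n)) (\<tau> l \<circ> Bmap f) sequentially"
      using unit_valued by (intro uniform_limit_tau_Bmap) auto
    then show "(\<lambda>n. \<tau> l (Bmap (K n) b)) \<longlonglongrightarrow> \<tau> l (Bmap f b)"
      using tendsto_uniform_limitI[where x=b] by fastforce
  qed (rule uniform_approx[OF dS_totally_bounded_formula_funs])
qed

end

theorem propositionV8:
  fixes Bmap :: "('x \<Rightarrow> real) \<Rightarrow> 'bx \<Rightarrow> 'bi"
    and \<tau> :: "'l \<Rightarrow> 'bi \<Rightarrow> real"
    and L :: "'l set"
    and x :: "'x \<Rightarrow> 'bx"
    and i :: nat
  assumes finL: "finite L"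
    and tau_range: "\<forall>l\<in>L. \<forall>b. \<tau> l b \<in> {0..1}"
    and tau_cont: "\<forall>(K :: nat \<Rightarrow> 'x \<Rightarrow> real) (f :: 'x \<Rightarrow> real).
        (\<forall>n a. K n a \<in> {0..1}) \<longrightarrow> (\<forall>a. f a \<in> {0..1}) \<longrightarrow>
        uniform_limit UNIV K f sequentially \<longrightarrow>
        (\<forall>l\<in>L. uniform_limit UNIV (\<lambda>n. \<tau> l \<circ> Bmap (K n)) (\<tau> l \<circ> Bmap f) sequentially)"
  shows "approximating Bmap \<tau> L
           {sem Bmap \<tau> x \<phi> | \<phi>. wf_form L \<phi> \<and> depth \<phi> \<le> i}"
proof -
  interpret coalgebraic_modal_logic Bmap \<tau> L x
    using finL tau_range tau_cont by unfold_locales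
  show ?thesis using approximating_formula_funs[of i] unfolding formula_funs_def .
qed

end
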